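(* There exists an absolute constant $C_2>0$ such that for every $\delta_0>0$ the following holds: if $\|\mathcal T-\mathcal S\|_{\mathrm{op}}<\delta_0$ and $x\in\mathbb C^n$ satisfies $$d(x,\mathcal G)\le\frac{16-5C_2\delta_0}{192+4C_2\delta_0}\,\|x^\natural\|,$$ then $x^+$ is a critical point of $f$ if and only if $x^+$ is a global minimizer of $f$.
   Context: Let $n,m\ge 1$, $a_1,\dots,a_m\in\mathbb C^n$ and $x^\natural\in\mathbb C^n$ with $x^\natural\ne0$. For $a,b\in\mathbb C^n$ write $\langle a,b\rangle=\sum_{j}a_j\overline{b_j}$ and let $\|\cdot\|$ be the Euclidean norm. Let $y_i=|\langle a_i,x^\natural\rangle|^2$. For $v\in\mathbb C^n$ put $v^+=(\mathrm{Re}\,v,\mathrm{Im}\,v)\in\mathbb R^{2n}$; $x$ and $x^+$ always correspond. Define $f:\mathbb R^{2n}\to\mathbb R$ by $f(x^+)=\sum_{i=1}^m\big(|\langle a_i,x\rangle|^2-y_i\big)^2$. Let $\mathcal G$ be the set of global minimizers of $f$ (viewed in $\mathbb C^n$) and $d(x,\mathcal G)$ the Euclidean distance from $x$ to $\mathcal G$. Fix $\sigma>0$ (in the paper, $\sigma^2=\mathrm{Var}((a_i^+)_1)$ for random measurement vectors), set $c=m\sigma^4$. Define the order-4 tensors on $\mathbb R^{2n}$: $\mathcal T=\frac1c\sum_{i=1}^m(a_i^+)^{\otimes 4}$ and $\mathcal S_{i_1i_2i_3i_4}=\mathbf 1_{i_1=i_2,\,i_3=i_4}+\mathbf 1_{i_1=i_3,\,i_2=i_4}+\mathbf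 1_{i_1=i_4,\,i_2=i_3}$, and $\|\mathcal R\|_{\mathrm{op}}=\sup\{\langle \mathcal R,u_1\otimes u_2\otimes u_3\otimes u_4\rangle:\ u_j\in\mathbb R^{2n},\ \|u_1\|\|u_2\|\|u_3\|\|u_4\|=1\}$ (tensor inner product = sum of entrywise products). *)

theory Defs
  imports Complex_Main
begin

text \<open>Vectors in C^n are represented as functions nat => complex, of which only the
coordinates 0..n-1 matter; vectors in R^(2n) as functions nat => real, of which only
the coordinates 0..2n-1 matter.  This explicit-carrier encoding is needed because
the constant C2 must be independent of n.\<close>

definition cinner :: "nat \<Rightarrow> (nat \<Rightarrow> complex) \<Rightarrow> (nat \<Rightarrow> complex) \<Rightarrow> complex" where
  "cinner n u v = (\<Sum>j<n. u j * cnj (v j))"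

definition cnorm :: "nat \<Rightarrow> (nat \<Rightarrow> complex) \<Rightarrow> real" where
  "cnorm n u = sqrt (\<Sum>j<n. (cmod (u j))\<^sup>2)"

definition rnorm :: "nat \<Rightarrow> (nat \<Rightarrow> real) \<Rightarrow> real" where
  "rnorm d u = sqrt (\<Sum>k<d. (u k)\<^sup>2)"

definition plusv :: "nat \<Rightarrow> (nat \<Rightarrow> complex) \<Rightarrow> (nat \<Rightarrow> real)" where
  "plusv n v = (\<lambda>k. if k < n then Re (v k) else if k < 2*n then Im (v (k - n)) else 0)"

definition unplus :: "nat \<Rightarrow> (nat \<Rightarrow> real) \<Rightarrow> (nat \<Rightarrow> complex)" where
  "unplus n w = (\<lambda>j. if j < n then Complex (w j) (w (n + j)) else 0)"

definition fobj :: "nat \<Rightarrow> nat \<Rightarrow> (nat \<Rightarrow> nat \<Rightarrow> complex) \<Rightarrow> (nat \<Rightarrow> complex) \<Rightarrow> (nat \<Rightarrow> real) \<Rightarrow> real" where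
  "fobj n m a xn w = (\<Sum>i<m. ((cmod (cinner n (a i) (unplus n w)))\<^sup>2 - (cmod (cinner n (a i) xn))\<^sup>2)\<^sup>2)"

definition critical_point :: "nat \<Rightarrow> ((nat \<Rightarrow> real) \<Rightarrow> real) \<Rightarrow> (nat \<Rightarrow> real) \<Rightarrow> bool" where
  "critical_point d F w \<longleftrightarrow>
     (\<forall>k<d. ((\<lambda>t. F (w(k := w k + t))) has_real_derivative 0) (at 0))"

definition global_minimizer :: "((nat \<Rightarrow> real) \<Rightarrow> real) \<Rightarrow> (nat \<Rightarrow> real) \<Rightarrow> bool" where
  "global_minimizer F w \<longleftrightarrow> (\<forall>w'. F w \<le> F w')"

definition Gmin :: "nat \<Rightarrow> nat \<Rightarrow> (nat \<Rightarrow> nat \<Rightarrow> complex) \<Rightarrow> (nat \<Rightarrow> complex) \<Rightarrow> (nat \<Rightarrow> complex) set" where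
  "Gmin n m a xn = {z. global_minimizer (fobj n m a xn) (plusv n z)}"

definition distG :: "nat \<Rightarrow> nat \<Rightarrow> (nat \<Rightarrow> nat \<Rightarrow> complex) \<Rightarrow> (nat \<Rightarrow> complex) \<Rightarrow> (nat \<Rightarrow> complex) \<Rightarrow> real" where
  "distG n m a xn x = Inf ((\<lambda>g. cnorm n (\<lambda>j. x j - g j)) ` Gmin n m a xn)"

definition tensT :: "nat \<Rightarrow> nat \<Rightarrow> (nat \<Rightarrow> nat \<Rightarrow> complex) \<Rightarrow> real \<Rightarrow> nat \<Rightarrow> nat \<Rightarrow> nat \<Rightarrow> nat \<Rightarrow> real" where
  "tensT n m a \<sigma> i1 i2 i3 i4 =
     (1 / (real m * \<sigma> ^ 4)) * (\<Sum>i<m. plusv n (a i) i1 * plusv n (a i) i2 * plusv n (a i) i3 * plusv n (a i) i4)"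

definition tensS :: "nat \<Rightarrow> nat \<Rightarrow> nat \<Rightarrow> nat \<Rightarrow> real" where
  "tensS i1 i2 i3 i4 =
     (if i1 = i2 \<and> i3 = i4 then 1 else 0) + (if i1 = i3 \<and> i2 = i4 then 1 else 0)
     + (if i1 = i4 \<and> i2 = i3 then 1 else 0)"

definition tens_opnorm :: "nat \<Rightarrow> (nat \<Rightarrow> nat \<Rightarrow> nat \<Rightarrow> nat \<Rightarrow> real) \<Rightarrow> real" where
  "tens_opnorm d R = Sup {(\<Sum>i1<d. \<Sum>i2<d. \<Sum>i3<d. \<Sum>i4<d. R i1 i2 i3 i4 * u1 i1 * u2 i2 * u3 i3 * u4 i4)
      | u1 u2 u3 u4. rnorm d u1 * rnorm d u2 * rnorm d u3 * rnorm d u4 = 1}"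

end

theory Submission
  imports Defs
begin

(* Write x = g + h, where g is a global minimizer close to x, multiplied by a phase so that
   <h, g> is real.  The global minimizers are exactly the g with |<a_i, g>| = |<a_i, x_nat>| for
   all i.  If x^+ is critical, the derivative of f in the direction h vanishes; with
   alpha_i = Re (<a_i, g> cnj <a_i, h>) and beta_i = |<a_i, h>|^2 this reads
   sum_i (2 alpha_i + beta_i) (alpha_i + beta_i) = 0, hence sum_i alpha_i^2 <= 5/4 sum_i beta_i^2.
   Closeness of T to the Gaussian moment tensor S turns both sides into norms:
   sum_i alpha_i^2 >= c (2 - 4 delta) |g|^2 |h|^2 and sum_i beta_i^2 <= c (8 + 4 delta) |h|^4,
   while |g| is comparable to |x_nat|.  For |h| < |x_nat| / 6 this forces h = 0.  Conversely,
   a global minimizer of the differentiable function f is a critical point. *)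

definition tensor_form :: "nat \<Rightarrow> (nat \<Rightarrow> nat \<Rightarrow> nat \<Rightarrow> nat \<Rightarrow> real) \<Rightarrow>
    (nat \<Rightarrow> real) \<Rightarrow> (nat \<Rightarrow> real) \<Rightarrow> (nat \<Rightarrow> real) \<Rightarrow> (nat \<Rightarrow> real) \<Rightarrow> real" where
  "tensor_form d R u1 u2 u3 u4 =
     (\<Sum>i1<d. \<Sum>i2<d. \<Sum>i3<d. \<Sum>i4<d. R i1 i2 i3 i4 * u1 i1 * u2 i2 * u3 i3 * u4 i4)"

definition rdot :: "nat \<Rightarrow> (nat \<Rightarrow> real) \<Rightarrow> (nat \<Rightarrow> real) \<Rightarrow> real" where
  "rdot d u v = (\<Sum>k<d. u k * v k)"

lemma rdot_commute: "rdot d u v = rdot d v u"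
  unfolding rdot_def by (simp add: mult.commute)

lemma rnorm_nonneg: "rnorm d u \<ge> 0"
  unfolding rnorm_def by (simp add: sum_nonneg)

lemma abs_le_rnorm: "k < d \<Longrightarrow> \<bar>u k\<bar> \<le> rnorm d u"
  unfolding rnorm_def by (rule real_le_rsqrt) (auto intro: member_le_sum)

lemma rnorm_scale: "rnorm d (\<lambda>k. c * u k) = \<bar>c\<bar> * rnorm d u"
  unfolding rnorm_def by (simp add: power_mult_distrib sum_distrib_left[symmetric] real_sqrt_mult)

lemma tensor_form_scale:
  "tensor_form d R (\<lambda>k. c1 * u1 k) (\<lambda>k. c2 * u2 k) (\<lambda>k. c3 * u3 k) (\<lambda>k. c4 * u4 k) =
   c1 * c2 * c3 * c4 * tensor_form d R u1 u2 u3 u4"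
  unfolding tensor_form_def by (simp add: sum_distrib_left algebra_simps)

lemma tensor_form_uminus: "tensor_form d R (\<lambda>k. - u1 k) u2 u3 u4 = - tensor_form d R u1 u2 u3 u4"
  unfolding tensor_form_def by (simp add: sum_negf)

lemma abs_tensor_form_le:
  "\<bar>tensor_form d R u1 u2 u3 u4\<bar> \<le>
   (\<Sum>i1<d. \<Sum>i2<d. \<Sum>i3<d. \<Sum>i4<d. \<bar>R i1 i2 i3 i4\<bar>) * (rnorm d u1 * rnorm d u2 * rnorm d u3 * rnorm d u4)"
proof -
  let ?P = "rnorm d u1 * rnorm d u2 * rnorm d u3 * rnorm d u4"
  have "\<bar>tensor_form d R u1 u2 u3 u4\<bar> \<le>
      (\<Sum>i1<d. \<Sum>i2<d. \<Sum>i3<d. \<Sum>i4<d. \<bar>R i1 i2 i3 i4 * u1 i1 * u2 i2 * u3 i3 * u4 i4\<bar>)"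
    unfolding tensor_form_def by (rule order_trans[OF sum_abs] sum_mono)+ (rule order_refl)
  also have "\<dots> \<le> (\<Sum>i1<d. \<Sum>i2<d. \<Sum>i3<d. \<Sum>i4<d. \<bar>R i1 i2 i3 i4\<bar> * ?P)"
    unfolding abs_mult mult.assoc
    by (intro sum_mono mult_left_mono mult_mono abs_le_rnorm) (auto simp: rnorm_nonneg)
  finally show ?thesis by (simp add: sum_distrib_right)
qed

lemma tensor_form_le_opnorm:
  "tensor_form d R u1 u2 u3 u4 \<le> tens_opnorm d R * (rnorm d u1 * rnorm d u2 * rnorm d u3 * rnorm d u4)"
proof (cases "rnorm d u1 = 0 \<or> rnorm d u2 = 0 \<or> rnorm d u3 = 0 \<or> rnorm d u4 = 0")
  case True
  then have "tensor_form d R u1 u2 u3 u4 = 0"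
    using abs_tensor_form_le[of d R u1 u2 u3 u4] by auto
  with True show ?thesis by auto
next
  case False
  define r1 r2 r3 r4 where "r1 = rnorm d u1" "r2 = rnorm d u2" "r3 = rnorm d u3" "r4 = rnorm d u4"
  have pos: "r1 > 0" "r2 > 0" "r3 > 0" "r4 > 0"
    using False rnorm_nonneg[of d] unfolding r1_r2_r3_r4_def by (auto simp: less_le)
  let ?S = "{tensor_form d R v1 v2 v3 v4 | v1 v2 v3 v4.
              rnorm d v1 * rnorm d v2 * rnorm d v3 * rnorm d v4 = 1}"
  have "bdd_above ?S"
  proof (rule bdd_aboveI)
    fix y assume "y \<in> ?S"
    then obtain v1 v2 v3 v4 where "y = tensor_form d R v1 v2 v3 v4"
      and "rnorm d v1 * rnorm d v2 * rnorm d v3 * rnorm d v4 = 1" by blast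
    then show "y \<le> (\<Sum>i1<d. \<Sum>i2<d. \<Sum>i3<d. \<Sum>i4<d. \<bar>R i1 i2 i3 i4\<bar>)"
      using abs_tensor_form_le[of d R v1 v2 v3 v4] by (simp add: abs_le_iff)
  qed
  moreover have "rnorm d (\<lambda>k. (1/r1) * u1 k) * rnorm d (\<lambda>k. (1/r2) * u2 k) *
      rnorm d (\<lambda>k. (1/r3) * u3 k) * rnorm d (\<lambda>k. (1/r4) * u4 k) = 1"
    using pos unfolding rnorm_scale r1_r2_r3_r4_def by simp
  then have "tensor_form d R (\<lambda>k. (1/r1) * u1 k) (\<lambda>k. (1/r2) * u2 k)
      (\<lambda>k. (1/r3) * u3 k) (\<lambda>k. (1/r4) * u4 k) \<in> ?S"
    by blast
  ultimately have "tensor_form d R (\<lambda>k. (1/r1) * u1 k) (\<lambda>k. (1/r2) * u2 k)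
      (\<lambda>k. (1/r3) * u3 k) (\<lambda>k. (1/r4) * u4 k) \<le> tens_opnorm d R"
    unfolding tens_opnorm_def tensor_form_def[symmetric] by (simp add: cSup_upper)
  then show ?thesis
    using pos unfolding tensor_form_scale r1_r2_r3_r4_def[symmetric] by (simp add: field_simps)
qed

lemma abs_tensor_form_le_opnorm:
  "\<bar>tensor_form d R u1 u2 u3 u4\<bar> \<le> tens_opnorm d R * (rnorm d u1 * rnorm d u2 * rnorm d u3 * rnorm d u4)"
  using tensor_form_le_opnorm[of d R u1 u2 u3 u4] tensor_form_le_opnorm[of d R "\<lambda>k. - u1 k" u2 u3 u4]
    rnorm_scale[of d "-1" u1]
  by (simp add: tensor_form_uminus abs_le_iff)

lemma tensor_form_add:
  "tensor_form d (\<lambda>i1 i2 i3 i4. A i1 i2 i3 i4 + B i1 i2 i3 i4) u1 u2 u3 u4 =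
   tensor_form d A u1 u2 u3 u4 + tensor_form d B u1 u2 u3 u4"
  unfolding tensor_form_def by (simp add: sum.distrib algebra_simps)

lemma tensor_form_diff:
  "tensor_form d (\<lambda>i1 i2 i3 i4. A i1 i2 i3 i4 - B i1 i2 i3 i4) u1 u2 u3 u4 =
   tensor_form d A u1 u2 u3 u4 - tensor_form d B u1 u2 u3 u4"
  unfolding tensor_form_def by (simp add: sum_subtractf algebra_simps)

lemma tensor_form_cmult:
  "tensor_form d (\<lambda>i1 i2 i3 i4. c * A i1 i2 i3 i4) u1 u2 u3 u4 = c * tensor_form d A u1 u2 u3 u4"
  unfolding tensor_form_def by (simp add: sum_distrib_left mult.assoc)

lemma tensor_form_sum:
  "tensor_form d (\<lambda>i1 i2 i3 i4. \<Sum>i\<in>I. A i i1 i2 i3 i4) u1 u2 u3 u4 =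
   (\<Sum>i\<in>I. tensor_form d (A i) u1 u2 u3 u4)"
proof (induction I rule: infinite_finite_induct)
  case (insert i I)
  then show ?case by (simp add: tensor_form_add)
qed (simp_all add: tensor_form_def)

lemma tensor_form_rank_one:
  "tensor_form d (\<lambda>i1 i2 i3 i4. p i1 * p i2 * p i3 * p i4) u1 u2 u3 u4 =
   rdot d p u1 * rdot d p u2 * rdot d p u3 * rdot d p u4"
proof -
  have "rdot d p u1 * rdot d p u2 * rdot d p u3 * rdot d p u4 =
    (\<Sum>i1<d. \<Sum>i2<d. \<Sum>i3<d. \<Sum>i4<d. p i1 * u1 i1 * (p i2 * u2 i2) * (p i3 * u3 i3) * (p i4 * u4 i4))"
    unfolding rdot_def by (simp only: sum_distrib_left[symmetric] sum_distrib_right[symmetric])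
  then show ?thesis
    unfolding tensor_form_def by (simp add: mult_ac)
qed

lemma tensor_form_delta_12_34:
  "tensor_form d (\<lambda>i1 i2 i3 i4. if i1 = i2 \<and> i3 = i4 then 1 else 0) u1 u2 u3 u4 =
   rdot d u1 u2 * rdot d u3 u4"
proof -
  have delta: "\<And>i1 i2 i3 i4 a b c e. (if i1 = i2 \<and> i3 = i4 then 1 else 0) * a * b * c * e =
    (if i2 = i1 then a * b else 0) * (if i4 = i3 then c * e else (0::real))"
    by auto
  show ?thesis
    unfolding tensor_form_def rdot_def delta
    by (simp only: sum_distrib_left[symmetric] sum_distrib_right[symmetric]) simp
qed

lemma tensor_form_delta_13_24:
  "tensor_form d (\<lambda>i1 i2 i3 i4. if i1 = i3 \<and> i2 = i4 then 1 else 0) u1 u2 u3 u4 =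
   rdot d u1 u3 * rdot d u2 u4"
proof -
  \<comment> \<open>testing the innermost summation index first lets \<open>sum.delta\<close> remove \<open>i4\<close>, then \<open>i3\<close>\<close>
  have delta: "\<And>i1 i2 i3 i4 a b c e. (if i1 = i3 \<and> i2 = i4 then 1 else 0) * a * b * c * e =
    (if i4 = i2 then if i3 = i1 then a * b * c * e else 0 else (0::real))"
    by auto
  show ?thesis
    unfolding tensor_form_def rdot_def sum_product delta by (simp add: mult_ac)
qed

lemma tensor_form_delta_14_23:
  "tensor_form d (\<lambda>i1 i2 i3 i4. if i1 = i4 \<and> i2 = i3 then 1 else 0) u1 u2 u3 u4 =
   rdot d u1 u4 * rdot d u2 u3"
proof -
  have delta: "\<And>i1 i2 i3 i4 a b c e. (if i1 = i4 \<and> i2 = i3 then 1 else 0) * a * b * c * e =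
    (if i4 = i1 then if i3 = i2 then a * b * c * e else 0 else (0::real))"
    by auto
  show ?thesis
    unfolding tensor_form_def rdot_def sum_product delta by (simp add: mult_ac)
qed

definition sample_form :: "nat \<Rightarrow> nat \<Rightarrow> (nat \<Rightarrow> nat \<Rightarrow> complex) \<Rightarrow>
    (nat \<Rightarrow> real) \<Rightarrow> (nat \<Rightarrow> real) \<Rightarrow> (nat \<Rightarrow> real) \<Rightarrow> (nat \<Rightarrow> real) \<Rightarrow> real" where
  "sample_form n m a u1 u2 u3 u4 =
     (\<Sum>i<m. rdot (2*n) (plusv n (a i)) u1 * rdot (2*n) (plusv n (a i)) u2 *
             rdot (2*n) (plusv n (a i)) u3 * rdot (2*n) (plusv n (a i)) u4)"

(* Isserlis' formula: the fourth moment E[<G,u1> <G,u2> <G,u3> <G,u4>] of a standard Gaussian G *)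
definition wick_form :: "nat \<Rightarrow> (nat \<Rightarrow> real) \<Rightarrow> (nat \<Rightarrow> real) \<Rightarrow> (nat \<Rightarrow> real) \<Rightarrow> (nat \<Rightarrow> real) \<Rightarrow> real" where
  "wick_form d u1 u2 u3 u4 = rdot d u1 u2 * rdot d u3 u4 + rdot d u1 u3 * rdot d u2 u4 + rdot d u1 u4 * rdot d u2 u3"

lemma tensor_form_tensT:
  "tensor_form (2*n) (tensT n m a \<sigma>) u1 u2 u3 u4 = sample_form n m a u1 u2 u3 u4 / (real m * \<sigma> ^ 4)"
  unfolding tensT_def tensor_form_cmult tensor_form_sum tensor_form_rank_one sample_form_def
  by simp

lemma tensor_form_tensS: "tensor_form d tensS u1 u2 u3 u4 = wick_form d u1 u2 u3 u4"
  unfolding tensS_def tensor_form_add tensor_form_delta_12_34 tensor_form_delta_13_24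
    tensor_form_delta_14_23 wick_form_def ..

definition fourth_moments_close :: "nat \<Rightarrow> nat \<Rightarrow> (nat \<Rightarrow> nat \<Rightarrow> complex) \<Rightarrow> real \<Rightarrow> real \<Rightarrow> bool" where
  "fourth_moments_close n m a c \<delta> \<longleftrightarrow> (\<forall>u1 u2 u3 u4.
     \<bar>sample_form n m a u1 u2 u3 u4 - c * wick_form (2*n) u1 u2 u3 u4\<bar>
       \<le> c * \<delta> * (rnorm (2*n) u1 * rnorm (2*n) u2 * rnorm (2*n) u3 * rnorm (2*n) u4))"

lemma tens_opnorm_bound_imp_fourth_moments_close:
  assumes "m \<ge> 1" "\<sigma> > 0"
    and "tens_opnorm (2*n) (\<lambda>i1 i2 i3 i4. tensT n m a \<sigma> i1 i2 i3 i4 - tensS i1 i2 i3 i4) < \<delta>"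
  shows "fourth_moments_close n m a (real m * \<sigma>^4) \<delta>"
  unfolding fourth_moments_close_def
proof (intro allI)
  fix u1 u2 u3 u4
  define c where "c = real m * \<sigma>^4"
  have "c > 0" using assms unfolding c_def by simp
  let ?P = "rnorm (2*n) u1 * rnorm (2*n) u2 * rnorm (2*n) u3 * rnorm (2*n) u4"
  have "\<bar>sample_form n m a u1 u2 u3 u4 / c - wick_form (2*n) u1 u2 u3 u4\<bar> \<le>
      tens_opnorm (2*n) (\<lambda>i1 i2 i3 i4. tensT n m a \<sigma> i1 i2 i3 i4 - tensS i1 i2 i3 i4) * ?P"
    using abs_tensor_form_le_opnorm[of "2*n" "\<lambda>i1 i2 i3 i4. tensT n m a \<sigma> i1 i2 i3 i4 - tensS i1 i2 i3 i4"]
    unfolding tensor_form_diff tensor_form_tensT tensor_form_tensS c_def .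
  also have "\<dots> \<le> \<delta> * ?P"
    using assms(3) by (intro mult_right_mono) (auto simp: rnorm_nonneg)
  finally have "c * \<bar>sample_form n m a u1 u2 u3 u4 / c - wick_form (2*n) u1 u2 u3 u4\<bar> \<le> c * (\<delta> * ?P)"
    using \<open>c > 0\<close> by simp
  moreover have "c * \<bar>sample_form n m a u1 u2 u3 u4 / c - wick_form (2*n) u1 u2 u3 u4\<bar> =
      \<bar>sample_form n m a u1 u2 u3 u4 - c * wick_form (2*n) u1 u2 u3 u4\<bar>"
    using \<open>c > 0\<close> by (simp add: abs_mult_pos' right_diff_distrib)
  ultimately show "\<bar>sample_form n m a u1 u2 u3 u4 - c * wick_form (2*n) u1 u2 u3 u4\<bar> \<le> c * \<delta> * ?P"
    by (simp add: mult_ac)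
qed

lemma sum_lessThan_double: "(\<Sum>k<2*(n::nat). F k) = (\<Sum>j<n. F j) + (\<Sum>j<n. F (n + j))"
proof -
  have "(\<Sum>k<2*n. F k) = sum F ({..<n} \<union> {n..<n+n})"
    by (rule sum.cong) auto
  also have "\<dots> = (\<Sum>j<n. F j) + (\<Sum>k\<in>{n..<n+n}. F k)"
    by (rule sum.union_disjoint) auto
  also have "(\<Sum>k\<in>{n..<n+n}. F k) = (\<Sum>j<n. F (n + j))"
    using sum.shift_bounds_nat_ivl[of F 0 n n] by (simp add: lessThan_atLeast0 add.commute)
  finally show ?thesis .
qed

lemma rdot_plusv: "rdot (2*n) (plusv n u) (plusv n v) = Re (cinner n u v)"
  unfolding rdot_def cinner_def sum_lessThan_double plusv_def
  by (simp add: Re_sum sum.distrib[symmetric])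

lemma rnorm_plusv: "rnorm (2*n) (plusv n v) = cnorm n v"
  unfolding rnorm_def cnorm_def sum_lessThan_double plusv_def
  by (simp add: sum.distrib[symmetric] cmod_power2)

lemma cinner_scale_left: "cinner n (\<lambda>j. z * u j) v = z * cinner n u v"
  unfolding cinner_def by (simp add: sum_distrib_left mult_ac)

lemma cinner_scale_right: "cinner n u (\<lambda>j. z * v j) = cnj z * cinner n u v"
  unfolding cinner_def by (simp add: sum_distrib_left mult_ac)

lemma cinner_add_right: "cinner n u (\<lambda>j. v j + w j) = cinner n u v + cinner n u w"
  unfolding cinner_def by (simp add: algebra_simps sum.distrib)

lemma cinner_diff_left: "cinner n (\<lambda>j. u j - v j) w = cinner n u w - cinner n v w"
  unfolding cinner_def by (simp add: algebra_simps sum_subtractf)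

lemma cinner_commute: "cinner n u v = cnj (cinner n v u)"
  unfolding cinner_def by (simp add: mult.commute)

lemma cinner_cong: "(\<And>j. j < n \<Longrightarrow> v j = w j) \<Longrightarrow> cinner n u v = cinner n u w"
  unfolding cinner_def by simp

lemma cnorm_nonneg: "cnorm n v \<ge> 0"
  unfolding cnorm_def by (simp add: sum_nonneg)

lemma cnorm_power2: "(cnorm n v)^2 = (\<Sum>j<n. (cmod (v j))\<^sup>2)"
  unfolding cnorm_def by (simp add: sum_nonneg)

lemma cnorm_scale: "cnorm n (\<lambda>j. z * v j) = cmod z * cnorm n v"
  unfolding cnorm_def
  by (simp add: norm_mult power_mult_distrib sum_distrib_left[symmetric] real_sqrt_mult)

lemma cinner_self: "cinner n v v = of_real ((cnorm n v)^2)"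
  unfolding cnorm_power2 cinner_def of_real_sum by (simp add: complex_norm_square[symmetric])

lemma cnorm_pos: "\<exists>j<n. v j \<noteq> 0 \<Longrightarrow> cnorm n v > 0"
  unfolding cnorm_def by (auto intro!: sum_pos2)

lemma cnorm_eq_0_imp: "cnorm n v = 0 \<Longrightarrow> j < n \<Longrightarrow> v j = 0"
  using cnorm_power2[of n v] by (simp add: sum_nonneg_eq_0_iff)

lemma cnorm_diff_power2:
  "(cnorm n (\<lambda>j. u j - v j))^2 = (cnorm n u)^2 + (cnorm n v)^2 - 2 * Re (cinner n u v)"
proof -
  have "\<And>z w. (cmod (z - w))^2 = (cmod z)^2 + (cmod w)^2 - 2 * Re (z * cnj w)"
    by (simp only: cmod_power2) (simp add: power2_eq_square algebra_simps)
  then show ?thesis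
    unfolding cnorm_power2 cinner_def Re_sum
    by (simp add: sum.distrib sum_subtractf sum_distrib_left)
qed

lemma Re_cinner_i_right: "Re (cinner n u (\<lambda>j. \<i> * v j)) = Im (cinner n u v)"
  unfolding cinner_scale_right by simp

lemma cinner_eq_Complex_rdot:
  "cinner n u v = Complex (rdot (2*n) (plusv n u) (plusv n v)) (rdot (2*n) (plusv n u) (plusv n (\<lambda>j. \<i> * v j)))"
  unfolding rdot_plusv Re_cinner_i_right by (simp add: complex_eq_iff)

lemma cmod_power4: "(cmod z)^4 = ((Re z)^2 + (Im z)^2)^2"
  unfolding cmod_power2[symmetric] by simp

lemma sum_cmod_cinner_power4_bounds:
  assumes "fourth_moments_close n m a c \<delta>"
  shows "\<bar>(\<Sum>i<m. (cmod (cinner n (a i) v))^4) - 8 * c * (cnorm n v)^4\<bar> \<le> 4 * c * \<delta> * (cnorm n v)^4"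
proof -
  define V W N where "V = plusv n v" and "W = plusv n (\<lambda>j. \<i> * v j)" and "N = cnorm n v"
  have "\<And>i. (cmod (cinner n (a i) v))^4 =
      ((rdot (2*n) (plusv n (a i)) V)^2 + (rdot (2*n) (plusv n (a i)) W)^2)^2"
    unfolding V_def W_def by (subst cinner_eq_Complex_rdot) (simp only: cmod_power4 complex.sel)
  then have sum: "(\<Sum>i<m. (cmod (cinner n (a i) v))^4) =
      sample_form n m a V V V V + 2 * sample_form n m a V V W W + sample_form n m a W W W W"
    unfolding sample_form_def by (simp add: sum.distrib sum_distrib_left power2_eq_square algebra_simps)
  have "rdot (2*n) V V = N^2" "rdot (2*n) W W = N^2" "rdot (2*n) V W = 0" "rdot (2*n) W V = 0"
    unfolding V_def W_def N_def rdot_plusv cinner_scale_left cinner_scale_right cinner_self by simp_all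
  then have "wick_form (2*n) V V V V = 3 * N^4" "wick_form (2*n) V V W W = N^4"
      "wick_form (2*n) W W W W = 3 * N^4"
    unfolding wick_form_def by (simp_all add: power2_eq_square power4_eq_xxxx)
  moreover have "rnorm (2*n) V = N" "rnorm (2*n) W = N"
    unfolding V_def W_def N_def rnorm_plusv cnorm_scale by simp_all
  ultimately show ?thesis
    using assms[unfolded fourth_moments_close_def, rule_format, of V V V V]
      assms[unfolded fourth_moments_close_def, rule_format, of V V W W]
      assms[unfolded fourth_moments_close_def, rule_format, of W W W W]
    unfolding sum N_def[symmetric] by (simp add: abs_le_iff power4_eq_xxxx)
qed

lemma sum_Re_cinner_cross_power2_lower:
  assumes close: "fourth_moments_close n m a c \<delta>" and "c > 0" and real: "Im (cinner n h g) = 0"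
  shows "c * (2 - 4 * \<delta>) * (cnorm n g)^2 * (cnorm n h)^2 \<le>
    (\<Sum>i<m. (Re (cinner n (a i) g * cnj (cinner n (a i) h)))^2)"
proof -
  define G H Gi Hi where "G = plusv n g" and "H = plusv n h"
    and "Gi = plusv n (\<lambda>j. \<i> * g j)" and "Hi = plusv n (\<lambda>j. \<i> * h j)"
  define Ng Nh e where "Ng = cnorm n g" and "Nh = cnorm n h" and "e = Re (cinner n g h)"
  have "\<And>i. (Re (cinner n (a i) g * cnj (cinner n (a i) h)))^2 =
      (rdot (2*n) (plusv n (a i)) G * rdot (2*n) (plusv n (a i)) H +
       rdot (2*n) (plusv n (a i)) Gi * rdot (2*n) (plusv n (a i)) Hi)^2"
    unfolding G_def H_def Gi_def Hi_def
    by (subst (1 2) cinner_eq_Complex_rdot) simp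
  then have sum: "(\<Sum>i<m. (Re (cinner n (a i) g * cnj (cinner n (a i) h)))^2) =
      sample_form n m a G H G H + 2 * sample_form n m a G H Gi Hi + sample_form n m a Gi Hi Gi Hi"
    unfolding sample_form_def by (simp add: sum.distrib sum_distrib_left power2_eq_square algebra_simps)
  have "Im (cinner n g h) = 0"
    using real by (subst cinner_commute) simp
  then have "rdot (2*n) G G = Ng^2" "rdot (2*n) H H = Nh^2" "rdot (2*n) Gi Gi = Ng^2"
    "rdot (2*n) Hi Hi = Nh^2" "rdot (2*n) G H = e" "rdot (2*n) H G = e" "rdot (2*n) Gi Hi = e"
    "rdot (2*n) Hi Gi = e" "rdot (2*n) G Gi = 0" "rdot (2*n) H Hi = 0" "rdot (2*n) G Hi = 0"
    "rdot (2*n) H Gi = 0"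
    using real rdot_commute[of "2*n" H G] rdot_commute[of "2*n" Hi Gi]
    unfolding G_def H_def Gi_def Hi_def Ng_def Nh_def e_def rdot_plusv cinner_scale_left
      cinner_scale_right cinner_self
    by simp_all
  then have "wick_form (2*n) G H G H = 2 * e^2 + Ng^2 * Nh^2" "wick_form (2*n) G H Gi Hi = e^2"
    "wick_form (2*n) Gi Hi Gi Hi = 2 * e^2 + Ng^2 * Nh^2"
    unfolding wick_form_def by (simp_all add: power2_eq_square)
  moreover have "rnorm (2*n) G = Ng" "rnorm (2*n) H = Nh" "rnorm (2*n) Gi = Ng" "rnorm (2*n) Hi = Nh"
    unfolding G_def H_def Gi_def Hi_def Ng_def Nh_def rnorm_plusv cnorm_scale by simp_all
  moreover have "c * e^2 \<ge> 0" using \<open>c > 0\<close> by simp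
  ultimately show ?thesis
    using close[unfolded fourth_moments_close_def, rule_format, of G H G H]
      close[unfolded fourth_moments_close_def, rule_format, of G H Gi Hi]
      close[unfolded fourth_moments_close_def, rule_format, of Gi Hi Gi Hi]
    unfolding sum Ng_def[symmetric] Nh_def[symmetric]
    by (simp add: abs_le_iff power2_eq_square algebra_simps)
qed

lemma global_minimizer_imp_critical_point:
  assumes "global_minimizer F w"
    and "\<And>k. k < d \<Longrightarrow> ((\<lambda>t. F (w(k := w k + t))) has_real_derivative D k) (at 0)"
  shows "critical_point d F w"
  unfolding critical_point_def
proof (intro allI impI)
  fix k assume "k < d"
  have "D k = 0"
  proof (rule DERIV_local_min[OF assms(2)[OF \<open>k < d\<close>], of 1])
    show "\<forall>t. \<bar>0 - t\<bar> < 1 \<longrightarrow> F (w(k := w k + 0)) \<le> F (w(k := w k + t))"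
      using assms(1) unfolding global_minimizer_def by simp
  qed simp
  then show "((\<lambda>t. F (w(k := w k + t))) has_real_derivative 0) (at 0)"
    using assms(2)[OF \<open>k < d\<close>] by simp
qed

lemma unplus_update:
  "unplus n (X(k := X k + t)) = (\<lambda>j. unplus n X j + of_real t * unplus n (\<lambda>l. of_bool (l = k)) j)"
  unfolding unplus_def by (auto simp: complex_eq_iff)

lemma cinner_unplus_basis_sum:
  "(\<Sum>k<2*n. of_real (H k) * cinner n u (unplus n (\<lambda>l. of_bool (l = k)))) = cinner n u (unplus n H)"
proof -
  have "\<And>j. j < n \<Longrightarrow> (\<Sum>k<2*n. of_real (H k) * cnj (unplus n (\<lambda>l. of_bool (l = k)) j)) = cnj (unplus n H j)"
    unfolding unplus_def sum_lessThan_double by (simp add: complex_eq_iff Re_sum Im_sum sum_negf)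
  then show ?thesis
    unfolding cinner_def sum_distrib_left
    by (subst sum.swap) (simp add: mult.left_commute sum_distrib_left[symmetric])
qed

lemma cinner_unplus_plusv: "cinner n u (unplus n (plusv n v)) = cinner n u v"
  by (rule cinner_cong) (simp add: unplus_def plusv_def complex_eq_iff)

lemma fobj_plusv:
  "fobj n m a xn (plusv n x) = (\<Sum>i<m. ((cmod (cinner n (a i) x))\<^sup>2 - (cmod (cinner n (a i) xn))\<^sup>2)\<^sup>2)"
  unfolding fobj_def cinner_unplus_plusv ..

lemma fobj_nonneg: "fobj n m a xn w \<ge> 0"
  unfolding fobj_def by (simp add: sum_nonneg)

lemma has_real_derivative_squared_residual:
  "((\<lambda>t. ((cmod (A + of_real t * B))\<^sup>2 - y)\<^sup>2) has_real_derivative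
     4 * ((cmod A)\<^sup>2 - y) * Re (A * cnj B)) (at 0)"
proof -
  have "((\<lambda>t. ((Re A + t * Re B)^2 + (Im A + t * Im B)^2 - y)^2) has_real_derivative
     4 * ((cmod A)\<^sup>2 - y) * Re (A * cnj B)) (at 0)"
    by (auto intro!: derivative_eq_intros simp: cmod_power2 algebra_simps)
  then show ?thesis by (simp add: cmod_power2)
qed

lemma fobj_has_partial_derivative:
  "((\<lambda>t. fobj n m a xn (X(k := X k + t))) has_real_derivative
     (\<Sum>i<m. 4 * ((cmod (cinner n (a i) (unplus n X)))\<^sup>2 - (cmod (cinner n (a i) xn))\<^sup>2) *
        Re (cinner n (a i) (unplus n X) * cnj (cinner n (a i) (unplus n (\<lambda>l. of_bool (l = k))))))) (at 0)"
  unfolding fobj_def unplus_update cinner_add_right cinner_scale_right complex_cnj_complex_of_real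
  by (intro DERIV_sum has_real_derivative_squared_residual)

lemma critical_point_fobj_imp_orthogonal:
  assumes "critical_point (2*n) (fobj n m a xn) (plusv n x)"
  shows "(\<Sum>i<m. ((cmod (cinner n (a i) x))\<^sup>2 - (cmod (cinner n (a i) xn))\<^sup>2) *
    Re (cinner n (a i) x * cnj (cinner n (a i) h))) = 0"
proof -
  define r where "r i = (cmod (cinner n (a i) x))\<^sup>2 - (cmod (cinner n (a i) xn))\<^sup>2" for i
  define z where "z i = cinner n (a i) x" for i
  define w where "w i k = cinner n (a i) (unplus n (\<lambda>l. of_bool (l = k)))" for i k
  have "(\<Sum>i<m. 4 * r i * Re (z i * cnj (w i k))) = 0" if "k < 2*n" for k
    using assms that fobj_has_partial_derivative[of n m a xn "plusv n x" k] DERIV_unique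
    unfolding critical_point_def cinner_unplus_plusv r_def z_def w_def by blast
  then have "0 = (\<Sum>k<2*n. plusv n h k * (\<Sum>i<m. 4 * r i * Re (z i * cnj (w i k))))"
    by simp
  also have "\<dots> = (\<Sum>i<m. \<Sum>k<2*n. plusv n h k * (4 * r i * Re (z i * cnj (w i k))))"
    unfolding sum_distrib_left by (rule sum.swap)
  also have "\<dots> = 4 * (\<Sum>i<m. r i * Re (z i * cnj (\<Sum>k<2*n. of_real (plusv n h k) * w i k)))"
    by (simp add: Re_sum cnj_sum sum_distrib_left algebra_simps)
  finally show ?thesis
    unfolding w_def cinner_unplus_basis_sum cinner_unplus_plusv r_def z_def by simp
qed

lemma global_minimizer_fobj_iff:
  "global_minimizer (fobj n m a xn) (plusv n z) \<longleftrightarrow>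
   (\<forall>i<m. cmod (cinner n (a i) z) = cmod (cinner n (a i) xn))"
proof -
  have "fobj n m a xn (plusv n xn) = 0"
    unfolding fobj_plusv by simp
  then have "global_minimizer (fobj n m a xn) (plusv n z) \<longleftrightarrow> fobj n m a xn (plusv n z) = 0"
    using fobj_nonneg[of n m a xn] unfolding global_minimizer_def by (metis order_antisym)
  also have "\<dots> \<longleftrightarrow> (\<forall>i<m. cmod (cinner n (a i) z) = cmod (cinner n (a i) xn))"
    unfolding fobj_plusv by (auto simp: sum_nonneg_eq_0_iff)
  finally show ?thesis .
qed

lemma Gmin_phase:
  assumes "z \<in> Gmin n m a xn" "cmod \<zeta> = 1"
  shows "(\<lambda>j. \<zeta> * z j) \<in> Gmin n m a xn"
  using assms unfolding Gmin_def global_minimizer_fobj_iff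
  by (simp add: cinner_scale_right norm_mult)

lemma distG_nonneg: "distG n m a xn x \<ge> 0"
proof -
  have "xn \<in> Gmin n m a xn"
    unfolding Gmin_def global_minimizer_fobj_iff by simp
  then show ?thesis
    unfolding distG_def by (intro cInf_greatest) (auto simp: cnorm_nonneg)
qed

lemma distG_less_imp_close_minimizer:
  assumes "distG n m a xn x < r"
  obtains g where "g \<in> Gmin n m a xn" "cnorm n (\<lambda>j. x j - g j) < r"
proof -
  have "xn \<in> Gmin n m a xn"
    unfolding Gmin_def global_minimizer_fobj_iff by simp
  then show ?thesis
    using cInf_lessD[of "(\<lambda>g. cnorm n (\<lambda>j. x j - g j)) ` Gmin n m a xn" r] assms that
    unfolding distG_def by blast
qed

lemma phase_alignment:
  obtains \<zeta> where "cmod \<zeta> = 1"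
    and "Im (cinner n (\<lambda>j. x j - \<zeta> * g j) (\<lambda>j. \<zeta> * g j)) = 0"
    and "cnorm n (\<lambda>j. x j - \<zeta> * g j) \<le> cnorm n (\<lambda>j. x j - g j)"
proof -
  define s where "s = cinner n x g"
  define \<zeta> where "\<zeta> = (if s = 0 then 1 else s / cmod s)"
  have "cmod \<zeta> = 1"
    unfolding \<zeta>_def by (simp add: norm_divide)
  have "cnj s * s = (cmod s)^2"
    using complex_norm_square[of s] by (simp add: mult.commute)
  then have aligned: "cinner n x (\<lambda>j. \<zeta> * g j) = cmod s"
    unfolding cinner_scale_right s_def[symmetric] \<zeta>_def by (simp add: power2_eq_square)
  have "Im (cinner n (\<lambda>j. x j - \<zeta> * g j) (\<lambda>j. \<zeta> * g j)) = 0"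
    unfolding cinner_diff_left aligned cinner_self by simp
  moreover have "(cnorm n (\<lambda>j. x j - \<zeta> * g j))^2 \<le> (cnorm n (\<lambda>j. x j - g j))^2"
    using complex_Re_le_cmod[of s] \<open>cmod \<zeta> = 1\<close>
    unfolding cnorm_diff_power2 aligned cnorm_scale s_def by simp
  then have "cnorm n (\<lambda>j. x j - \<zeta> * g j) \<le> cnorm n (\<lambda>j. x j - g j)"
    by (rule power2_le_imp_le) (simp add: cnorm_nonneg)
  ultimately show ?thesis
    using \<open>cmod \<zeta> = 1\<close> that by blast
qed

lemma critical_point_cross_le_quartic:
  assumes crit: "critical_point (2*n) (fobj n m a xn) (plusv n (\<lambda>j. g j + h j))"
    and g: "\<forall>i<m. cmod (cinner n (a i) g) = cmod (cinner n (a i) xn)"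
  shows "(\<Sum>i<m. (Re (cinner n (a i) g * cnj (cinner n (a i) h)))^2) \<le>
    5/4 * (\<Sum>i<m. (cmod (cinner n (a i) h))^4)"
proof -
  define \<alpha> \<beta> where "\<alpha> i = Re (cinner n (a i) g * cnj (cinner n (a i) h))"
    and "\<beta> i = (cmod (cinner n (a i) h))\<^sup>2" for i
  have expand: "\<And>u w. (cmod (u + w))\<^sup>2 - (cmod u)\<^sup>2 = 2 * Re (u * cnj w) + (cmod w)\<^sup>2"
    "\<And>u w. Re ((u + w) * cnj w) = Re (u * cnj w) + (cmod w)\<^sup>2"
    by (simp_all only: cmod_power2) (simp_all add: power2_eq_square algebra_simps)
  have pointwise: "(2 * \<alpha> i + \<beta> i) * (\<alpha> i + \<beta> i) =
    ((cmod (cinner n (a i) (\<lambda>j. g j + h j)))\<^sup>2 - (cmod (cinner n (a i) xn))\<^sup>2) *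
      Re (cinner n (a i) (\<lambda>j. g j + h j) * cnj (cinner n (a i) h))" if "i < m" for i
  proof -
    have "cmod (cinner n (a i) xn) = cmod (cinner n (a i) g)"
      using g that by simp
    then show ?thesis
      unfolding \<alpha>_def \<beta>_def cinner_add_right by (simp only: expand)
  qed
  have "(\<Sum>i<m. (2 * \<alpha> i + \<beta> i) * (\<alpha> i + \<beta> i)) =
    (\<Sum>i<m. ((cmod (cinner n (a i) (\<lambda>j. g j + h j)))\<^sup>2 - (cmod (cinner n (a i) xn))\<^sup>2) *
      Re (cinner n (a i) (\<lambda>j. g j + h j) * cnj (cinner n (a i) h)))"
    by (rule sum.cong[OF refl]) (simp add: pointwise)
  also have "\<dots> = 0"
    by (rule critical_point_fobj_imp_orthogonal[OF crit])
  finally have "(\<Sum>i<m. (2 * \<alpha> i + \<beta> i) * (\<alpha> i + \<beta> i)) = 0" .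
  moreover have "\<alpha> i ^ 2 - 5/4 * \<beta> i ^ 2 \<le> (2 * \<alpha> i + \<beta> i) * (\<alpha> i + \<beta> i)" for i
  proof -
    have "(2 * \<alpha> i + \<beta> i) * (\<alpha> i + \<beta> i) - (\<alpha> i ^ 2 - 5/4 * \<beta> i ^ 2) = (\<alpha> i + 3/2 * \<beta> i)^2"
      by (simp add: power2_eq_square algebra_simps)
    then show ?thesis
      using zero_le_power2[of "\<alpha> i + 3/2 * \<beta> i"] by linarith
  qed
  ultimately have "(\<Sum>i<m. \<alpha> i ^ 2 - 5/4 * \<beta> i ^ 2) \<le> 0"
    using sum_mono[of "{..<m}" "\<lambda>i. \<alpha> i ^ 2 - 5/4 * \<beta> i ^ 2" "\<lambda>i. (2 * \<alpha> i + \<beta> i) * (\<alpha> i + \<beta> i)"]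
    by simp
  then show ?thesis
    unfolding \<alpha>_def \<beta>_def by (simp add: sum_subtractf sum_distrib_left)
qed

lemma quartic_estimates_force_zero:
  fixes \<delta> N Ng Nh :: real
  assumes \<delta>: "0 \<le> \<delta>" "\<delta> \<le> 1/10" and "N > 0" and Nh: "0 \<le> Nh" "Nh < N/6"
    and g: "(8 - 4 * \<delta>) * N^4 \<le> (8 + 4 * \<delta>) * Ng^4"
    and h: "(2 - 4 * \<delta>) * Ng^2 * Nh^2 \<le> 5/4 * (8 + 4 * \<delta>) * Nh^4"
  shows "Nh = 0"
proof (rule ccontr)
  assume "Nh \<noteq> 0"
  then have "Nh^2 > 0" using Nh by simp
  have "(2 - 4 * \<delta>) * Ng^2 * Nh^2 \<le> (5/4 * (8 + 4 * \<delta>) * Nh^2) * Nh^2"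
    using h by (simp add: power4_eq_xxxx power2_eq_square mult_ac)
  then have "8/5 * Ng^2 \<le> 5/4 * (8 + 4 * \<delta>) * Nh^2"
    using \<open>Nh^2 > 0\<close> \<delta> mult_right_mono[of "8/5" "2 - 4 * \<delta>" "Ng^2"] by simp
  also have "\<dots> \<le> 5/4 * (42/5) * (N/6)^2"
    using \<delta> Nh by (intro mult_mono power_mono) auto
  finally have "192 * Ng^2 \<le> 35 * N^2"
    by (simp add: power_divide)
  then have "Ng^2 \<le> N^2 / 5"
    using zero_le_power2[of N] by linarith
  then have "(Ng^2)^2 \<le> (N^2 / 5)^2"
    by (intro power_mono) auto
  then have "Ng^4 \<le> N^4 / 25"
    by (simp add: power_divide flip: power_mult)
  then have "(8 + 4 * \<delta>) * Ng^4 \<le> 42/5 * (N^4 / 25)"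
    using \<delta> by (intro mult_mono) auto
  then have "(8 - 4 * \<delta>) * N^4 \<le> 42/5 * (N^4 / 25)"
    using g by linarith
  moreover have "38/5 * N^4 \<le> (8 - 4 * \<delta>) * N^4"
    using \<delta> \<open>N > 0\<close> by (intro mult_right_mono) auto
  ultimately show False
    using \<open>N > 0\<close> by simp
qed

lemma critical_point_perturbation_vanishes:
  assumes close: "fourth_moments_close n m a c \<delta>" and "c > 0" "0 \<le> \<delta>" "\<delta> \<le> 1/10"
    and g: "\<forall>i<m. cmod (cinner n (a i) g) = cmod (cinner n (a i) xn)"
    and real: "Im (cinner n h g) = 0" and "cnorm n xn > 0" and small: "cnorm n h < cnorm n xn / 6"
    and crit: "critical_point (2*n) (fobj n m a xn) (plusv n (\<lambda>j. g j + h j))"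
  shows "cnorm n h = 0"
proof (rule quartic_estimates_force_zero[OF \<open>0 \<le> \<delta>\<close> \<open>\<delta> \<le> 1/10\<close> \<open>cnorm n xn > 0\<close> cnorm_nonneg small])
  have "(\<Sum>i<m. (cmod (cinner n (a i) g))^4) = (\<Sum>i<m. (cmod (cinner n (a i) xn))^4)"
    using g by simp
  then have "c * ((8 - 4 * \<delta>) * (cnorm n xn)^4) \<le> c * ((8 + 4 * \<delta>) * (cnorm n g)^4)"
    using sum_cmod_cinner_power4_bounds[OF close, of g] sum_cmod_cinner_power4_bounds[OF close, of xn]
    by (simp add: abs_le_iff algebra_simps)
  then show "(8 - 4 * \<delta>) * (cnorm n xn)^4 \<le> (8 + 4 * \<delta>) * (cnorm n g)^4"
    using \<open>c > 0\<close> by simp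
  have "c * (2 - 4 * \<delta>) * (cnorm n g)^2 * (cnorm n h)^2 \<le> 5/4 * (\<Sum>i<m. (cmod (cinner n (a i) h))^4)"
    using sum_Re_cinner_cross_power2_lower[OF close \<open>c > 0\<close> real]
      critical_point_cross_le_quartic[OF crit g] by linarith
  also have "\<dots> \<le> 5/4 * (c * ((8 + 4 * \<delta>) * (cnorm n h)^4))"
    using sum_cmod_cinner_power4_bounds[OF close, of h] by (simp add: abs_le_iff algebra_simps)
  finally show "(2 - 4 * \<delta>) * (cnorm n g)^2 * (cnorm n h)^2 \<le> 5/4 * (8 + 4 * \<delta>) * (cnorm n h)^4"
    using \<open>c > 0\<close> by (simp add: mult_ac)
qed

lemma critical_point_near_Gmin_imp_global_minimizer:
  assumes close: "fourth_moments_close n m a c \<delta>" and "c > 0" "0 \<le> \<delta>" "\<delta> \<le> 1/10"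
    and "\<exists>j<n. xn j \<noteq> 0" and near: "distG n m a xn x < cnorm n xn / 6"
    and crit: "critical_point (2*n) (fobj n m a xn) (plusv n x)"
  shows "global_minimizer (fobj n m a xn) (plusv n x)"
proof -
  obtain g0 where "g0 \<in> Gmin n m a xn" and g0_near: "cnorm n (\<lambda>j. x j - g0 j) < cnorm n xn / 6"
    using distG_less_imp_close_minimizer[OF near] .
  obtain \<zeta> where "cmod \<zeta> = 1" and real: "Im (cinner n (\<lambda>j. x j - \<zeta> * g0 j) (\<lambda>j. \<zeta> * g0 j)) = 0"
    and closer: "cnorm n (\<lambda>j. x j - \<zeta> * g0 j) \<le> cnorm n (\<lambda>j. x j - g0 j)"
    using phase_alignment .
  define g h where "g = (\<lambda>j. \<zeta> * g0 j)" and "h = (\<lambda>j. x j - g j)"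
  have g: "\<forall>i<m. cmod (cinner n (a i) g) = cmod (cinner n (a i) xn)"
    using Gmin_phase[OF \<open>g0 \<in> Gmin n m a xn\<close> \<open>cmod \<zeta> = 1\<close>]
    unfolding g_def Gmin_def global_minimizer_fobj_iff by simp
  have "Im (cinner n h g) = 0"
    using real unfolding g_def h_def .
  moreover have "cnorm n h < cnorm n xn / 6"
    using closer g0_near unfolding g_def h_def by linarith
  moreover have "critical_point (2*n) (fobj n m a xn) (plusv n (\<lambda>j. g j + h j))"
    using crit unfolding h_def by simp
  ultimately have "cnorm n h = 0"
    using critical_point_perturbation_vanishes[OF close \<open>c > 0\<close> \<open>0 \<le> \<delta>\<close> \<open>\<delta> \<le> 1/10\<close> g]
      cnorm_pos[OF \<open>\<exists>j<n. xn j \<noteq> 0\<close>] by blast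
  then have "\<And>j. j < n \<Longrightarrow> x j = g j"
    using cnorm_eq_0_imp unfolding h_def by fastforce
  then show ?thesis
    using g cinner_cong unfolding global_minimizer_fobj_iff by metis
qed

lemma admissible_radius_bounds:
  fixes \<delta> r N :: real
  assumes "0 < \<delta>" "0 < N" "0 \<le> r" "r \<le> (16 - 5 * 32 * \<delta>) / (192 + 4 * 32 * \<delta>) * N"
  shows "\<delta> \<le> 1/10" and "r < N / 6"
proof -
  have "0 \<le> (16 - 5 * 32 * \<delta>) / (192 + 4 * 32 * \<delta>) * N"
    using assms by linarith
  then show "\<delta> \<le> 1/10"
    using assms by (simp add: zero_le_mult_iff zero_le_divide_iff)
  have "(16 - 5 * 32 * \<delta>) / (192 + 4 * 32 * \<delta>) \<le> 1/12"
    using \<open>0 < \<delta>\<close> by (simp add: divide_le_eq)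
  then have "(16 - 5 * 32 * \<delta>) / (192 + 4 * 32 * \<delta>) * N \<le> 1/12 * N"
    using \<open>0 < N\<close> by (intro mult_right_mono) auto
  then show "r < N / 6"
    using assms by linarith
qed

theorem proposition7:
  shows "\<exists>C2::real. C2 > 0 \<and>
    (\<forall>\<delta>0::real. \<delta>0 > 0 \<longrightarrow>
      (\<forall>(n::nat) (m::nat) (a::nat \<Rightarrow> nat \<Rightarrow> complex) (xn::nat \<Rightarrow> complex) (\<sigma>::real) (x::nat \<Rightarrow> complex).
         n \<ge> 1 \<longrightarrow> m \<ge> 1 \<longrightarrow> (\<exists>j<n. xn j \<noteq> 0) \<longrightarrow> \<sigma> > 0 \<longrightarrow>
         tens_opnorm (2*n) (\<lambda>i1 i2 i3 i4. tensT n m a \<sigma> i1 i2 i3 i4 - tensS i1 i2 i3 i4) < \<delta>0 \<longrightarrow>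
         distG n m a xn x \<le> (16 - 5 * C2 * \<delta>0) / (192 + 4 * C2 * \<delta>0) * cnorm n xn \<longrightarrow>
         (critical_point (2*n) (fobj n m a xn) (plusv n x) \<longleftrightarrow>
          global_minimizer (fobj n m a xn) (plusv n x))))"
proof (intro exI[of _ 32] conjI allI impI)
  fix \<delta>0 :: real and n m :: nat and a :: "nat \<Rightarrow> nat \<Rightarrow> complex" and xn x :: "nat \<Rightarrow> complex"
    and \<sigma> :: real
  assume "\<delta>0 > 0" "m \<ge> 1" "\<exists>j<n. xn j \<noteq> 0" "\<sigma> > 0"
    and opnorm: "tens_opnorm (2*n) (\<lambda>i1 i2 i3 i4. tensT n m a \<sigma> i1 i2 i3 i4 - tensS i1 i2 i3 i4) < \<delta>0"
    and dist: "distG n m a xn x \<le> (16 - 5 * 32 * \<delta>0) / (192 + 4 * 32 * \<delta>0) * cnorm n xn"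
  note radius = admissible_radius_bounds[OF \<open>\<delta>0 > 0\<close> cnorm_pos[OF \<open>\<exists>j<n. xn j \<noteq> 0\<close>] distG_nonneg dist]
  show "critical_point (2*n) (fobj n m a xn) (plusv n x) \<longleftrightarrow> global_minimizer (fobj n m a xn) (plusv n x)"
  proof
    assume "critical_point (2*n) (fobj n m a xn) (plusv n x)"
    then show "global_minimizer (fobj n m a xn) (plusv n x)"
      using critical_point_near_Gmin_imp_global_minimizer[OF
          tens_opnorm_bound_imp_fourth_moments_close[OF \<open>m \<ge> 1\<close> \<open>\<sigma> > 0\<close> opnorm]]
        \<open>m \<ge> 1\<close> \<open>\<sigma> > 0\<close> \<open>\<delta>0 > 0\<close> radius \<open>\<exists>j<n. xn j \<noteq> 0\<close> by simp
  next
    assume "global_minimizer (fobj n m a xn) (plusv n x)"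
    then show "critical_point (2*n) (fobj n m a xn) (plusv n x)"
      by (rule global_minimizer_imp_critical_point[OF _ fobj_has_partial_derivative])
  qed
qed simp

end
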